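(* Fix an integer $C\ge 2$. There exists $\rho_0>0$ (depending only on $C$; e.g. $\rho_0=3$ suffices) such that for every $\rho\ge\rho_0$ and all $h_L\in[0,1]$, $h_S\in[0,1]$, $h_F\in(-1,1)$, $$\frac{\partial \mathcal{J}_h^{\mathcal{G}}}{\partial h_S}\ge 0 .$$
   Context: Setting: $C\ge 2$ is the number of classes, $h_L\in[0,1]$ (label homophily), $h_S\in[0,1]$ (structural homophily), $h_F\in(-1,1)$ (feature homophily), and $\rho>0$ a real parameter (the spectral radius of the adjacency matrix). Define $$p_0=\frac{h_LC-1}{C-1},\qquad p_1=\frac{1-h_L}{C-1},\qquad \omega=\frac{h_F}{\rho},\qquad Q=C\,p_1^2+\frac{C(1-h_S)^2}{C-1}+p_0^2\ (>0),$$ $$\mathcal{J}_h^{\neg\mathcal{G}}=\frac{1-\omega^2 Q}{(1-\omega p_0)^2},\qquad \mathcal{J}_h^{\mathcal{G}}=\frac{p_0^2}{Q}\,\mathcal{J}_h^{\neg\mathcal{G}}.$$ Partial derivatives are taken with $C$ and $\rho$ held fixed. *)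

theory Defs
  imports "HOL-Analysis.Analysis"
begin

definition p0_of :: "real \<Rightarrow> real \<Rightarrow> real" where
  "p0_of C hL = (hL * C - 1) / (C - 1)"

definition p1_of :: "real \<Rightarrow> real \<Rightarrow> real" where
  "p1_of C hL = (1 - hL) / (C - 1)"

definition omega_of :: "real \<Rightarrow> real \<Rightarrow> real" where
  "omega_of \<rho> hF = hF / \<rho>"

definition Q_of :: "real \<Rightarrow> real \<Rightarrow> real \<Rightarrow> real" where
  "Q_of C hL hS = C * (p1_of C hL)^2 + C * (1 - hS)^2 / (C - 1) + (p0_of C hL)^2"

definition J_noG :: "real \<Rightarrow> real \<Rightarrow> real \<Rightarrow> real \<Rightarrow> real \<Rightarrow> real" where
  "J_noG C \<rho> hL hS hF =
     (1 - (omega_of \<rho> hF)^2 * Q_of C hL hS) / (1 - omega_of \<rho> hF * p0_of C hL)^2"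

definition J_G :: "real \<Rightarrow> real \<Rightarrow> real \<Rightarrow> real \<Rightarrow> real \<Rightarrow> real" where
  "J_G C \<rho> hL hS hF = (p0_of C hL)^2 / Q_of C hL hS * J_noG C \<rho> hL hS hF"

end

theory Submission
  imports Defs
begin

text \<open>Only \<open>Q\<close> depends on \<open>h\<^sub>S\<close>, and \<open>\<J>\<^sub>h\<^sup>\<G> = (p\<^sub>0 / (1 - \<omega> p\<^sub>0))\<^sup>2 (1/Q - \<omega>\<^sup>2)\<close>.
  Since \<open>Q\<close> is a positive quadratic in \<open>h\<^sub>S\<close> that decreases on \<open>[0,1]\<close>, \<open>1/Q\<close> increases
  there, whatever the value of \<open>\<rho>\<close>; so any \<open>\<rho>\<^sub>0 > 0\<close> works.\<close>

lemma p0_p1_not_both_zero: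
  assumes "C > 1"
  shows "p0_of C hL \<noteq> 0 \<or> p1_of C hL \<noteq> 0"
proof (rule ccontr)
  assume "\<not> ?thesis"
  hence "p1_of C hL = 0" and p0: "p0_of C hL = 0" by auto
  hence "hL = 1" using assms by (simp add: p1_of_def)
  with p0 assms show False by (simp add: p0_of_def)
qed

lemma Q_of_pos:
  assumes "C > 1"
  shows "Q_of C hL s > 0"
proof -
  have "C * (p1_of C hL)\<^sup>2 + (p0_of C hL)\<^sup>2 > 0"
    using p0_p1_not_both_zero[OF assms, of hL] assms
    by (auto intro: add_nonneg_pos add_pos_nonneg)
  moreover have "C * (1 - s)\<^sup>2 / (C - 1) \<ge> 0" using assms by simp
  ultimately show ?thesis unfolding Q_of_def by linarith
qed

lemma J_G_eq:
  assumes "C > 1"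
  shows "J_G C \<rho> hL s hF =
    (p0_of C hL / (1 - omega_of \<rho> hF * p0_of C hL))\<^sup>2 *
    (inverse (Q_of C hL s) - (omega_of \<rho> hF)\<^sup>2)"
  using Q_of_pos[OF assms, of hL s]
  by (simp add: J_G_def J_noG_def field_simps)

lemma Q_of_has_derivative_hS:
  assumes "C \<noteq> 1"
  shows "((\<lambda>s. Q_of C hL s) has_real_derivative - 2 * C * (1 - s) / (C - 1)) (at s)"
  unfolding Q_of_def using assms
  by (auto intro!: derivative_eq_intros simp: divide_simps power2_eq_square; algebra)

lemma J_G_has_derivative_hS:
  assumes "C > 1"
  shows "((\<lambda>s. J_G C \<rho> hL s hF) has_real_derivative
    (p0_of C hL / (1 - omega_of \<rho> hF * p0_of C hL))\<^sup>2 *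
    (2 * C * (1 - s) / (C - 1) / (Q_of C hL s)\<^sup>2)) (at s)"
proof -
  have "Q_of C hL s \<noteq> 0" using Q_of_pos[OF assms] by (metis less_irrefl)
  moreover note Q_of_has_derivative_hS[of C hL s]
  ultimately have "((\<lambda>s. inverse (Q_of C hL s) - (omega_of \<rho> hF)\<^sup>2) has_real_derivative
      2 * C * (1 - s) / (C - 1) / (Q_of C hL s)\<^sup>2) (at s)"
    using assms by (auto intro!: derivative_eq_intros simp: power2_eq_square field_simps)
  then show ?thesis
    unfolding J_G_eq[OF assms] by (rule DERIV_cmult)
qed

theorem theorem2p2:
  fixes C :: nat
  assumes "C \<ge> 2"
  shows "\<exists>\<rho>0 > 0. \<forall>\<rho> \<ge> \<rho>0. \<forall>hL \<in> {0..1}. \<forall>hS::real \<in> {0..1}. \<forall>hF \<in> {-1<..<1}.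
           deriv (\<lambda>s. J_G (real C) \<rho> hL s hF) hS \<ge> 0"
proof (intro exI[of _ 1] conjI allI impI ballI)
  fix \<rho> hL hS hF :: real
  assume "hS \<in> {0..1}"
  have C: "real C > 1" using assms by simp
  have "deriv (\<lambda>s. J_G (real C) \<rho> hL s hF) hS =
    (p0_of C hL / (1 - omega_of \<rho> hF * p0_of C hL))\<^sup>2 *
    (2 * real C * (1 - hS) / (real C - 1) / (Q_of C hL hS)\<^sup>2)"
    by (rule DERIV_imp_deriv[OF J_G_has_derivative_hS[OF C]])
  also have "\<dots> \<ge> 0" using C \<open>hS \<in> {0..1}\<close> by simp
  finally show "deriv (\<lambda>s. J_G (real C) \<rho> hL s hF) hS \<ge> 0" .
qed simp

end
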